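(* Let $P$ be a polyhedron (a polyhedral map of genus 0) and $T$ the truncation operation. Then $\mathrm{Aut}(P)=\mathrm{Aut}(T(P))$, in the sense that every automorphism of $T(P)$ is induced by an automorphism of $P$; in particular $|\mathrm{Aut}(T(P))|=|\mathrm{Aut}(P)|$.
   Context: A polyhedral map is a 3-connected graph embedded in a closed orientable surface such that every face is an open disc and the closures of any two faces have connected intersection; $\mathrm{Aut}(P)$ denotes its automorphism group. The truncation $T(P)$ of $P$ is the map obtained by "cutting off" every vertex: $T(P)$ has one vertex $(v,e)$ for every pair of a vertex $v$ and an incident edge $e$ of $P$; for each edge $e=vw$ of $P$ the vertices $(v,e)$ and $(w,e)$ are adjacent, and for each vertex $v$ the vertices $(v,e)$, $(v,e')$ are adjacent whenever $e,e'$ are consecutive in the rotation around $v$. Thus each vertex $v$ of degree $d$ is replaced by a face of size $d$ and each face of size $k$ of $P$ becomes a face of size $2k$. Every automorphism of $P$ induces an automorphism of $T(P)$ in the obvious way. *)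

theory Defs
  imports Main
begin

text \<open>A map on a closed orientable surface is encoded by a finite set of darts D,
  a fixed-point-free involution alpha (the two darts of an edge) and a permutation
  sigma (rotation of darts around a vertex).  Every face of such a map is an
  open disc by construction.\<close>

definition orb :: "('d \<Rightarrow> 'd) \<Rightarrow> 'd \<Rightarrow> 'd set" where
  "orb f x = {(f ^^ n) x | n. True}"

definition vertex_of :: "('d \<Rightarrow> 'd) \<Rightarrow> 'd \<Rightarrow> 'd set" where
  "vertex_of \<sigma> d = orb \<sigma> d"

definition map_vertices :: "'d set \<Rightarrow> ('d \<Rightarrow> 'd) \<Rightarrow> 'd set set" where
  "map_vertices D \<sigma> = orb \<sigma> ` D"

definition map_edges :: "'d set \<Rightarrow> ('d \<Rightarrow> 'd) \<Rightarrow> 'd set set" where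
  "map_edges D \<alpha> = (\<lambda>d. {d, \<alpha> d}) ` D"

definition map_faces :: "'d set \<Rightarrow> ('d \<Rightarrow> 'd) \<Rightarrow> ('d \<Rightarrow> 'd) \<Rightarrow> 'd set set" where
  "map_faces D \<alpha> \<sigma> = orb (\<sigma> \<circ> \<alpha>) ` D"

definition comb_map :: "'d set \<Rightarrow> ('d \<Rightarrow> 'd) \<Rightarrow> ('d \<Rightarrow> 'd) \<Rightarrow> bool" where
  "comb_map D \<alpha> \<sigma> \<longleftrightarrow>
     finite D \<and> D \<noteq> {} \<and> bij_betw \<alpha> D D \<and> bij_betw \<sigma> D D \<and>
     (\<forall>d\<in>D. \<alpha> d \<noteq> d \<and> \<alpha> (\<alpha> d) = d) \<and>
     (\<forall>d\<in>D. \<forall>d'\<in>D. (d, d') \<in> ({(x, \<alpha> x) | x. x \<in> D} \<union> {(x, \<sigma> x) | x. x \<in> D})\<^sup>*)"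

definition genus0 :: "'d set \<Rightarrow> ('d \<Rightarrow> 'd) \<Rightarrow> ('d \<Rightarrow> 'd) \<Rightarrow> bool" where
  "genus0 D \<alpha> \<sigma> \<longleftrightarrow>
     int (card (map_vertices D \<sigma>)) - int (card (map_edges D \<alpha>))
       + int (card (map_faces D \<alpha> \<sigma>)) = 2"

definition map_adj :: "'d set \<Rightarrow> ('d \<Rightarrow> 'd) \<Rightarrow> ('d \<Rightarrow> 'd) \<Rightarrow> 'd set \<Rightarrow> 'd set \<Rightarrow> bool" where
  "map_adj D \<alpha> \<sigma> u w \<longleftrightarrow> (\<exists>d\<in>D. orb \<sigma> d = u \<and> orb \<sigma> (\<alpha> d) = w)"

definition simple_map :: "'d set \<Rightarrow> ('d \<Rightarrow> 'd) \<Rightarrow> ('d \<Rightarrow> 'd) \<Rightarrow> bool" where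
  "simple_map D \<alpha> \<sigma> \<longleftrightarrow>
     (\<forall>d\<in>D. orb \<sigma> (\<alpha> d) \<noteq> orb \<sigma> d) \<and>
     (\<forall>d\<in>D. \<forall>d'\<in>D. orb \<sigma> d = orb \<sigma> d' \<and> orb \<sigma> (\<alpha> d) = orb \<sigma> (\<alpha> d') \<longrightarrow> d = d')"

definition graph_connected_on :: "'v set \<Rightarrow> ('v \<Rightarrow> 'v \<Rightarrow> bool) \<Rightarrow> bool" where
  "graph_connected_on W adj \<longleftrightarrow>
     (\<forall>u\<in>W. \<forall>w\<in>W. (u, w) \<in> {(x, y). x \<in> W \<and> y \<in> W \<and> adj x y}\<^sup>*)"

definition three_connected :: "'d set \<Rightarrow> ('d \<Rightarrow> 'd) \<Rightarrow> ('d \<Rightarrow> 'd) \<Rightarrow> bool" where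
  "three_connected D \<alpha> \<sigma> \<longleftrightarrow>
     simple_map D \<alpha> \<sigma> \<and> card (map_vertices D \<sigma>) \<ge> 4 \<and>
     (\<forall>S \<subseteq> map_vertices D \<sigma>. card S < 3 \<longrightarrow>
        graph_connected_on (map_vertices D \<sigma> - S) (map_adj D \<alpha> \<sigma>))"

text \<open>Closure of a face f (a set of darts): its boundary vertices and edges.
  The intersection of two face closures is the subcomplex formed by the common
  vertices and common (closed) edges; it is connected iff the graph with these
  vertices and edges is connected (the empty set counts as connected).\<close>
definition face_closures_meet_connected :: "'d set \<Rightarrow> ('d \<Rightarrow> 'd) \<Rightarrow> ('d \<Rightarrow> 'd) \<Rightarrow> bool" where
  "face_closures_meet_connected D \<alpha> \<sigma> \<longleftrightarrow>
     (\<forall>f\<in>map_faces D \<alpha> \<sigma>. \<forall>g\<in>map_faces D \<alpha> \<sigma>. f \<noteq> g \<longrightarrow>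
        graph_connected_on (orb \<sigma> ` f \<inter> orb \<sigma> ` g)
          (\<lambda>u w. \<exists>d\<in>D. {d, \<alpha> d} \<in> (\<lambda>x. {x, \<alpha> x}) ` f \<inter> (\<lambda>x. {x, \<alpha> x}) ` g \<and>
                        orb \<sigma> d = u \<and> orb \<sigma> (\<alpha> d) = w))"

definition polyhedral_map :: "'d set \<Rightarrow> ('d \<Rightarrow> 'd) \<Rightarrow> ('d \<Rightarrow> 'd) \<Rightarrow> bool" where
  "polyhedral_map D \<alpha> \<sigma> \<longleftrightarrow>
     comb_map D \<alpha> \<sigma> \<and> three_connected D \<alpha> \<sigma> \<and> face_closures_meet_connected D \<alpha> \<sigma>"

definition polyhedron :: "'d set \<Rightarrow> ('d \<Rightarrow> 'd) \<Rightarrow> ('d \<Rightarrow> 'd) \<Rightarrow> bool" where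
  "polyhedron D \<alpha> \<sigma> \<longleftrightarrow> polyhedral_map D \<alpha> \<sigma> \<and> genus0 D \<alpha> \<sigma>"

definition orientation_preserving :: "'d set \<Rightarrow> ('d \<Rightarrow> 'd) \<Rightarrow> ('d \<Rightarrow> 'd) \<Rightarrow> bool" where
  "orientation_preserving D \<sigma> g \<longleftrightarrow> (\<forall>d\<in>D. g (\<sigma> d) = \<sigma> (g d))"

definition map_aut :: "'d set \<Rightarrow> ('d \<Rightarrow> 'd) \<Rightarrow> ('d \<Rightarrow> 'd) \<Rightarrow> ('d \<Rightarrow> 'd) \<Rightarrow> bool" where
  "map_aut D \<alpha> \<sigma> g \<longleftrightarrow>
     bij_betw g D D \<and> (\<forall>d. d \<notin> D \<longrightarrow> g d = d) \<and>
     (\<forall>d\<in>D. g (\<alpha> d) = \<alpha> (g d)) \<and>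
     (orientation_preserving D \<sigma> g \<or> (\<forall>d\<in>D. g (\<sigma> d) = inv_into D \<sigma> (g d)))"

definition Aut :: "'d set \<Rightarrow> ('d \<Rightarrow> 'd) \<Rightarrow> ('d \<Rightarrow> 'd) \<Rightarrow> ('d \<Rightarrow> 'd) set" where
  "Aut D \<alpha> \<sigma> = {g. map_aut D \<alpha> \<sigma> g}"

text \<open>The vertices of T(P) are the darts d = (v,e) of P.  Each has degree 3; its darts are
  (d,0) (along the edge e, towards alpha d), (d,1) (towards sigma d) and
  (d,2) (towards sigma^-1 d).\<close>

definition trunc_darts :: "'d set \<Rightarrow> ('d \<times> nat) set" where
  "trunc_darts D = D \<times> {0, 1, 2}"

definition trunc_alpha :: "'d set \<Rightarrow> ('d \<Rightarrow> 'd) \<Rightarrow> ('d \<Rightarrow> 'd) \<Rightarrow> 'd \<times> nat \<Rightarrow> 'd \<times> nat" where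
  "trunc_alpha D \<alpha> \<sigma> x =
     (if x \<in> trunc_darts D then
        (case x of (d, i) \<Rightarrow>
          if i = 0 then (\<alpha> d, 0)
          else if i = 1 then (\<sigma> d, 2)
          else (inv_into D \<sigma> d, 1))
      else x)"

definition trunc_sigma :: "'d set \<Rightarrow> 'd \<times> nat \<Rightarrow> 'd \<times> nat" where
  "trunc_sigma D x =
     (if x \<in> trunc_darts D then (case x of (d, i) \<Rightarrow> (d, (i + 1) mod 3)) else x)"

definition trunc_induced :: "'d set \<Rightarrow> ('d \<Rightarrow> 'd) \<Rightarrow> ('d \<Rightarrow> 'd) \<Rightarrow> 'd \<times> nat \<Rightarrow> 'd \<times> nat" where
  "trunc_induced D \<sigma> g x =
     (if x \<in> trunc_darts D then
        (case x of (d, i) \<Rightarrow>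
          (g d, if orientation_preserving D \<sigma> g \<or> i = 0 then i else 3 - i))
      else x)"

end

theory Submission
  imports Defs
begin

(*
  Every automorphism h of T(P) commutes with the vertex rotation of T(P) or with its inverse,
  so it permutes the vertices of T(P).  The V faces of T(P) that replace the vertices of P
  contain exactly one dart at every vertex of T(P), hence so do their images under h.  A family
  of faces of T(P) with this property either contains one of these V faces, and then, P being
  connected, consists of all of them; or all its faces come from faces of P, which then form one
  colour class of a proper 2-colouring of the faces of P.  In the latter case V <= E/3 and
  F <= 2E/3, because every face has at least three sides, contradicting Euler's formula
  V - E + F = 2.  Hence h preserves the darts of type 2 and therefore those of type 0, which run
  along the edges of P, and h is induced by the automorphism of P that it defines on them.
*)

section \<open>Orbits of a permutation of a finite set\<close>

lemma mem_orb_iff: "y \<in> orb f x \<longleftrightarrow> (\<exists>n. y = (f ^^ n) x)"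
  by (auto simp: orb_def)

lemma orb_self [simp]: "x \<in> orb f x"
  unfolding mem_orb_iff by (metis funpow_0)

lemma orb_step: "y \<in> orb f x \<Longrightarrow> f y \<in> orb f x"
  unfolding mem_orb_iff by (metis funpow.simps(2) o_apply)

lemma orb_induct [consumes 1, case_names self step]:
  assumes "y \<in> orb f x" and "P x" and "\<And>z. P z \<Longrightarrow> P (f z)"
  shows "P y"
proof -
  have "P ((f ^^ n) x)" for n
    by (induct n) (simp_all add: assms(2,3))
  then show ?thesis
    using assms(1) by (auto simp: mem_orb_iff)
qed

lemma orb_subset:
  assumes "f ` A \<subseteq> A" and "x \<in> A"
  shows "orb f x \<subseteq> A"
proof
  fix y
  assume "y \<in> orb f x"
  then show "y \<in> A"
    by (induct rule: orb_induct) (use assms in auto)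
qed

lemma funpow_in_orb: "(f ^^ n) x \<in> orb f x"
  by (auto simp: mem_orb_iff)

lemma orb_mono: "y \<in> orb f x \<Longrightarrow> orb f y \<subseteq> orb f x"
  by (auto elim: orb_induct intro: orb_step)

lemma funpow_returns:
  assumes "finite A" and "bij_betw f A A" and "x \<in> A"
  obtains n where "n > 0" and "(f ^^ n) x = x"
proof -
  have "range (\<lambda>n. (f ^^ n) x) \<subseteq> orb f x"
    by (auto simp: mem_orb_iff)
  also have "\<dots> \<subseteq> A"
    using orb_subset[of f A x] assms by (simp add: bij_betw_def)
  finally have "range (\<lambda>n. (f ^^ n) x) \<subseteq> A" .
  then have "\<not> inj (\<lambda>n. (f ^^ n) x)"
    using assms(1) finite_imageD finite_subset infinite_UNIV_nat by blast
  then obtain i j where ij: "i < j" "(f ^^ i) x = (f ^^ j) x"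
    unfolding inj_def by (metis linorder_neqE_nat)
  then have "(f ^^ i) ((f ^^ (j - i)) x) = (f ^^ i) x"
    by (metis add_diff_inverse_nat comp_apply funpow_add less_imp_le_nat not_le)
  moreover have "(f ^^ (j - i)) x \<in> A"
    using bij_betw_funpow[OF assms(2)] assms(3) by (meson bij_betwE)
  ultimately have "(f ^^ (j - i)) x = x"
    using bij_betw_funpow[OF assms(2), of i] assms(3) by (auto simp: bij_betw_def dest: inj_onD)
  with ij(1) show thesis
    using that[of "j - i"] by simp
qed

lemma orb_sym:
  assumes "finite A" and "bij_betw f A A" and "x \<in> A" and "y \<in> orb f x"
  shows "x \<in> orb f y"
proof -
  obtain m where m: "y = (f ^^ m) x"
    using assms(4) by (auto simp: mem_orb_iff)
  obtain n where "n > 0" and period: "(f ^^ n) x = x"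
    using funpow_returns[OF assms(1-3)] .
  have "(f ^^ (n * m - m)) y = (f ^^ (n * m - m + m)) x"
    by (simp add: m funpow_add)
  also have "n * m - m + m = m * n"
    using \<open>n > 0\<close> by (simp add: mult.commute)
  also have "(f ^^ (m * n)) x = x"
    using period by (induct m) (simp_all add: funpow_add)
  finally show ?thesis
    by (auto simp: mem_orb_iff)
qed

lemma orb_eq:
  assumes "finite A" and "bij_betw f A A" and "x \<in> A" and "y \<in> orb f x"
  shows "orb f y = orb f x"
  using orb_mono[OF assms(4)] orb_mono[OF orb_sym[OF assms]] by blast

lemma orbs_disjoint:
  assumes "finite A" and "bij_betw f A A" and "x \<in> A" and "y \<in> A"
    and "orb f x \<noteq> orb f y"
  shows "orb f x \<inter> orb f y = {}"
  using orb_eq[OF assms(1,2,3)] orb_eq[OF assms(1,2,4)] assms(5) by blast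

lemma bij_betw_restrict_closed:
  assumes "finite A" and "bij_betw f A A" and "B \<subseteq> A" and "f ` B \<subseteq> B"
  shows "bij_betw f B B"
proof -
  have "inj_on f B"
    using assms(2,3) by (auto simp: bij_betw_def intro: inj_on_subset)
  with assms show ?thesis
    by (metis bij_betw_def endo_inj_surj finite_subset)
qed

lemma orb_conj:
  assumes "p ` A \<subseteq> A" and "\<forall>x\<in>A. k (p x) = q (k x)" and "x \<in> A"
  shows "orb q (k x) = k ` orb p x"
proof -
  have "(q ^^ n) (k x) = k ((p ^^ n) x) \<and> (p ^^ n) x \<in> A" for n
    by (induct n) (use assms in auto)
  then show ?thesis
    unfolding orb_def by (auto simp: image_iff)
qed

lemma card_orbs_conj:
  assumes "inj_on k A" and "p ` A \<subseteq> A" and "\<forall>x\<in>A. k (p x) = q (k x)"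
  shows "card (orb q ` k ` A) = card (orb p ` A)"
proof -
  have "orb q ` k ` A = image k ` orb p ` A"
    using orb_conj[OF assms(2,3)] by (force simp: image_image)
  moreover have "inj_on (image k) (orb p ` A)"
    using orb_subset[OF assms(2)] assms(1)
    by (intro inj_onI) (auto simp: inj_on_image_eq_iff)
  ultimately show ?thesis
    by (simp add: card_image)
qed

lemma image_invariant_if_conj:
  assumes "bij_betw h A A" and "r ` A \<subseteq> A" and conj: "\<forall>x\<in>A. h (r x) = p (h x)"
    and "B \<subseteq> A" and invariant: "\<forall>x\<in>A. r x \<in> B \<longleftrightarrow> x \<in> B"
  shows "\<forall>y\<in>A. p y \<in> h ` B \<longleftrightarrow> y \<in> h ` B"
proof
  fix y
  assume "y \<in> A"
  then obtain x where x: "x \<in> A" "y = h x"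
    using assms(1) by (auto simp: bij_betw_def)
  have inj: "inj_on h A"
    using assms(1) by (simp add: bij_betw_def)
  have "p y \<in> h ` B \<longleftrightarrow> h (r x) \<in> h ` B"
    using conj x by simp
  also have "\<dots> \<longleftrightarrow> r x \<in> B"
    using inj_on_image_mem_iff[OF inj _ assms(4)] assms(2) x(1) by blast
  also have "\<dots> \<longleftrightarrow> x \<in> B"
    using invariant x(1) by blast
  also have "\<dots> \<longleftrightarrow> y \<in> h ` B"
    using inj_on_image_mem_iff[OF inj x(1) assms(4)] x(2) by simp
  finally show "p y \<in> h ` B \<longleftrightarrow> y \<in> h ` B" .
qed

lemma orb_subset_orb_if_step:
  assumes "g ` A \<subseteq> A" and "\<forall>z\<in>A. g z \<in> orb f z" and "x \<in> A"
  shows "orb g x \<subseteq> orb f x"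
proof
  fix y
  assume "y \<in> orb g x"
  then have "y \<in> orb f x \<and> y \<in> A"
  proof (induct rule: orb_induct)
    case self
    show ?case using assms(3) by simp
  next
    case (step z)
    then have "g z \<in> orb f z" and "g z \<in> A"
      using assms(1,2) by auto
    then show ?case
      using orb_mono[of z f x] step by auto
  qed
  then show "y \<in> orb f x" ..
qed

lemma orb_inv_into:
  assumes "finite A" and "bij_betw f A A" and "x \<in> A"
  shows "orb (inv_into A f) x = orb f x"
proof
  let ?g = "inv_into A f"
  have g: "bij_betw ?g A A"
    by (rule bij_betw_inv_into[OF assms(2)])
  have "?g z \<in> orb f z" if "z \<in> A" for z
  proof (rule orb_sym[OF assms(1,2)])
    show "?g z \<in> A"
      using g that by (rule bij_betw_apply)
    show "z \<in> orb f (?g z)"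
      using orb_step[OF orb_self] assms(2) that by (metis bij_betw_inv_into_right)
  qed
  then show "orb ?g x \<subseteq> orb f x"
    using g assms(3) by (intro orb_subset_orb_if_step) (auto simp: bij_betw_def)
  have "f z \<in> orb ?g z" if "z \<in> A" for z
  proof (rule orb_sym[OF assms(1) g])
    show "f z \<in> A"
      using assms(2) that by (rule bij_betw_apply)
    show "z \<in> orb ?g (f z)"
      using orb_step[OF orb_self] assms(2) that by (metis bij_betw_inv_into_left)
  qed
  then show "orb f x \<subseteq> orb ?g x"
    using assms(2,3) by (intro orb_subset_orb_if_step) (auto simp: bij_betw_def)
qed

lemma orb_inter_alternating:
  assumes qA: "q ` A \<subseteq> A" and "Z \<subseteq> A" and switch: "\<forall>x\<in>A. q x \<in> Z \<longleftrightarrow> x \<notin> Z"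
    and xZ: "x \<in> Z"
  shows "orb q x \<inter> Z = orb (q \<circ> q) x"
proof -
  have parity: "(q ^^ n) x \<in> Z \<longleftrightarrow> even n" for n
  proof (induct n)
    case (Suc n)
    have "(q ^^ n) x \<in> A"
      using orb_subset[OF qA, of x] funpow_in_orb[of n q x] xZ assms(2) by blast
    then show ?case
      using switch Suc by simp
  qed (use xZ in simp)
  have square: "((q \<circ> q) ^^ m) x = (q ^^ (2 * m)) x" for m
    by (induct m) simp_all
  show ?thesis
  proof (intro equalityI subsetI)
    fix y
    assume "y \<in> orb q x \<inter> Z"
    then obtain n where y: "y = (q ^^ n) x" and "even n"
      using parity by (auto simp: mem_orb_iff)
    then obtain m where "n = 2 * m"
      by (auto elim: evenE)
    then have "y = ((q \<circ> q) ^^ m) x"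
      using y square by simp
    then show "y \<in> orb (q \<circ> q) x"
      by (auto simp: mem_orb_iff)
  next
    fix y
    assume "y \<in> orb (q \<circ> q) x"
    then obtain m where "y = (q ^^ (2 * m)) x"
      using square by (auto simp: mem_orb_iff)
    then show "y \<in> orb q x \<inter> Z"
      using parity funpow_in_orb by auto
  qed
qed

lemma orbs_alternating_eq:
  assumes "finite A" and "bij_betw q A A" and "Z \<subseteq> A"
    and switch: "\<forall>x\<in>A. q x \<in> Z \<longleftrightarrow> x \<notin> Z"
  shows "orb q ` A = orb q ` Z"
proof
  show "orb q ` A \<subseteq> orb q ` Z"
  proof
    fix U
    assume "U \<in> orb q ` A"
    then obtain x where x: "x \<in> A" "U = orb q x"
      by blast
    show "U \<in> orb q ` Z"
    proof (cases "x \<in> Z")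
      case False
      then have "U = orb q (q x)" and "q x \<in> Z"
        using orb_eq[OF assms(1,2) x(1) orb_step[OF orb_self]] x switch by auto
      then show ?thesis
        by blast
    qed (use x in blast)
  qed
qed (use assms(3) in blast)

lemma card_orbs_alternating:
  assumes "finite A" and "bij_betw q A A" and "Z \<subseteq> A"
    and "\<forall>x\<in>A. q x \<in> Z \<longleftrightarrow> x \<notin> Z"
  shows "card (orb q ` A) = card (orb (q \<circ> q) ` Z)"
proof -
  have "inj_on (\<lambda>U. U \<inter> Z) (orb q ` Z)"
  proof (rule inj_onI)
    fix U1 U2
    assume "U1 \<in> orb q ` Z" "U2 \<in> orb q ` Z" "U1 \<inter> Z = U2 \<inter> Z"
    then obtain x1 x2 where x: "x1 \<in> Z" "x2 \<in> Z" "U1 = orb q x1" "U2 = orb q x2"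
      by blast
    then have "x1 \<in> orb q x2"
      using \<open>U1 \<inter> Z = U2 \<inter> Z\<close> orb_self[of x1 q] by blast
    then show "U1 = U2"
      using orb_eq[OF assms(1,2), of x2 x1] assms(3) x by auto
  qed
  then have "card (orb q ` A) = card ((\<lambda>U. U \<inter> Z) ` orb q ` Z)"
    using orbs_alternating_eq[OF assms] by (simp add: card_image)
  also have "(\<lambda>U. U \<inter> Z) ` orb q ` Z = orb (q \<circ> q) ` Z"
    using orb_inter_alternating[OF _ assms(3,4)] assms(2)
    unfolding image_image by (intro image_cong) (simp_all add: bij_betw_def)
  finally show ?thesis .
qed

lemma card_orbs_mult_le:
  assumes "finite A" and "bij_betw f A A" and "\<forall>x\<in>A. n \<le> card (orb f x)"
  shows "n * card (orb f ` A) \<le> card A"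
proof -
  have fA: "f ` A \<subseteq> A"
    using assms(2) by (simp add: bij_betw_def)
  have union: "\<Union>(orb f ` A) = A"
  proof
    show "\<Union>(orb f ` A) \<subseteq> A"
      using orb_subset[OF fA] by blast
    show "A \<subseteq> \<Union>(orb f ` A)"
      using orb_self by fast
  qed
  have disjoint: "pairwise disjnt (orb f ` A)"
    using orbs_disjoint[OF assms(1,2)] by (auto simp: pairwise_def disjnt_def)
  have finite: "finite U" if "U \<in> orb f ` A" for U
    using that orb_subset[OF fA] assms(1) by (auto intro: finite_subset)
  have "card A = (\<Sum>U\<in>orb f ` A. card U)"
    using card_Union_disjoint[OF disjoint finite] by (simp add: union)
  moreover have "card (orb f ` A) * n \<le> (\<Sum>U\<in>orb f ` A. card U)"
    using sum_bounded_below[of "orb f ` A" n card] assms(3) by auto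
  ultimately show ?thesis
    by (simp add: mult.commute)
qed

lemma graph_connected_on_neighbour:
  assumes "graph_connected_on W adj" and "v \<in> W" and "u \<in> W" and "u \<noteq> v"
  obtains w where "w \<in> W" and "adj v w"
proof -
  let ?R = "{(x, y). x \<in> W \<and> y \<in> W \<and> adj x y}"
  have "(v, u) \<in> ?R\<^sup>*"
    using assms(1-3) unfolding graph_connected_on_def by blast
  then obtain w where "(v, w) \<in> ?R"
    using assms(4) by (auto elim: converse_rtranclE)
  then show thesis
    using that by blast
qed

locale polyhedral_sphere =
  fixes D :: "'d set" and \<alpha> \<sigma> :: "'d \<Rightarrow> 'd"
  assumes polyhedron: "polyhedron D \<alpha> \<sigma>"
begin

abbreviation \<sigma>' :: "'d \<Rightarrow> 'd" where "\<sigma>' \<equiv> inv_into D \<sigma>"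

abbreviation \<phi> :: "'d \<Rightarrow> 'd" where "\<phi> \<equiv> \<sigma> \<circ> \<alpha>"

lemma comb_map: "comb_map D \<alpha> \<sigma>"
  and three_connected: "three_connected D \<alpha> \<sigma>"
  and simple: "simple_map D \<alpha> \<sigma>"
  and genus0: "genus0 D \<alpha> \<sigma>"
  using polyhedron by (simp_all add: polyhedron_def polyhedral_map_def three_connected_def)

lemma finite_D: "finite D"
  and D_ne: "D \<noteq> {}"
  and bij_alpha: "bij_betw \<alpha> D D"
  and bij_sigma: "bij_betw \<sigma> D D"
  using comb_map by (simp_all add: comb_map_def)

lemma alpha_alpha [simp]: "d \<in> D \<Longrightarrow> \<alpha> (\<alpha> d) = d"
  using comb_map by (simp add: comb_map_def)

lemma alpha_in [simp]: "d \<in> D \<Longrightarrow> \<alpha> d \<in> D"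
  using bij_alpha by (rule bij_betw_apply)

lemma sigma_in [simp]: "d \<in> D \<Longrightarrow> \<sigma> d \<in> D"
  using bij_sigma by (rule bij_betw_apply)

lemma sigma'_in [simp]: "d \<in> D \<Longrightarrow> \<sigma>' d \<in> D"
  using bij_betw_inv_into[OF bij_sigma] by (rule bij_betw_apply)

lemma sigma_sigma' [simp]: "d \<in> D \<Longrightarrow> \<sigma> (\<sigma>' d) = d"
  using bij_sigma by (rule bij_betw_inv_into_right)

lemma sigma'_sigma [simp]: "d \<in> D \<Longrightarrow> \<sigma>' (\<sigma> d) = d"
  using bij_sigma by (rule bij_betw_inv_into_left)

lemma bij_phi: "bij_betw \<phi> D D"
  using bij_alpha bij_sigma by (rule bij_betw_trans)

lemma orb_sigma_eq: "x \<in> D \<Longrightarrow> y \<in> orb \<sigma> x \<Longrightarrow> orb \<sigma> y = orb \<sigma> x"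
  by (rule orb_eq[OF finite_D bij_sigma])

lemma orb_sigma_sigma [simp]: "d \<in> D \<Longrightarrow> orb \<sigma> (\<sigma> d) = orb \<sigma> d"
  by (intro orb_sigma_eq orb_step orb_self)

lemma alpha_sigma_closed_subset_eq:
  assumes "X \<subseteq> D" and "X \<noteq> {}" and closed: "\<forall>x\<in>X. \<alpha> x \<in> X \<and> \<sigma> x \<in> X"
  shows "X = D"
proof
  obtain x0 where x0: "x0 \<in> X"
    using assms(2) by blast
  show "D \<subseteq> X"
  proof
    fix d
    assume "d \<in> D"
    then have "(x0, d) \<in> ({(x, \<alpha> x) | x. x \<in> D} \<union> {(x, \<sigma> x) | x. x \<in> D})\<^sup>*"
      using comb_map x0 assms(1) unfolding comb_map_def by blast
    then show "d \<in> X"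
    proof (induct rule: rtrancl_induct)
      case (step y z)
      then show ?case
        using closed by blast
    qed (rule x0)
  qed
qed (rule assms(1))

lemma no_loop: "d \<in> D \<Longrightarrow> orb \<sigma> (\<alpha> d) \<noteq> orb \<sigma> d"
  using simple by (simp add: simple_map_def)

lemma no_multi_edge:
  "d \<in> D \<Longrightarrow> d' \<in> D \<Longrightarrow> orb \<sigma> d = orb \<sigma> d' \<Longrightarrow> orb \<sigma> (\<alpha> d) = orb \<sigma> (\<alpha> d') \<Longrightarrow> d = d'"
  using simple unfolding simple_map_def by blast

lemma three_connected_neighbour:
  assumes "S \<subseteq> map_vertices D \<sigma>" and "card S \<le> 2"
    and "v \<in> map_vertices D \<sigma>" and "v \<notin> S"
  obtains w where "w \<in> map_vertices D \<sigma> - S" and "map_adj D \<alpha> \<sigma> v w"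
proof -
  let ?V = "map_vertices D \<sigma>"
  have connected: "graph_connected_on (?V - S) (map_adj D \<alpha> \<sigma>)"
    using three_connected assms(1,2) unfolding three_connected_def by auto
  have "finite S"
    using assms(1) finite_D by (auto simp: map_vertices_def intro: finite_subset)
  have "\<not> ?V \<subseteq> insert v S"
  proof
    assume "?V \<subseteq> insert v S"
    then have "card ?V \<le> card (insert v S)"
      using \<open>finite S\<close> by (intro card_mono) simp_all
    also have "\<dots> \<le> 3"
      using assms(2) \<open>finite S\<close> by (simp add: card_insert_if)
    finally show False
      using three_connected unfolding three_connected_def by simp
  qed
  then obtain u where "u \<in> ?V - S" and "u \<noteq> v"
    by blast
  then show thesis
    using graph_connected_on_neighbour[OF connected] assms(3,4) that by blast
qed

lemma sigma_sigma_neq: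
  assumes x: "x \<in> D"
  shows "\<sigma> (\<sigma> x) \<noteq> x"
proof
  assume ss: "\<sigma> (\<sigma> x) = x"
  let ?v = "orb \<sigma> x"
  define S where "S = (\<lambda>d. orb \<sigma> (\<alpha> d)) ` {x, \<sigma> x}"
  have v_sub: "?v \<subseteq> {x, \<sigma> x}"
  proof
    fix y
    assume "y \<in> ?v"
    then show "y \<in> {x, \<sigma> x}"
      by (induct rule: orb_induct) (auto simp: ss)
  qed
  have "card S \<le> card {x, \<sigma> x}"
    unfolding S_def by (rule card_image_le) simp
  also have "\<dots> \<le> 2"
    by (cases "\<sigma> x = x") simp_all
  finally have card_S: "card S \<le> 2" .
  have S_sub: "S \<subseteq> map_vertices D \<sigma>" and v_in: "?v \<in> map_vertices D \<sigma>"
    using x unfolding S_def map_vertices_def by auto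
  have v_notin: "?v \<notin> S"
  proof
    assume "?v \<in> S"
    then obtain d where d: "d \<in> {x, \<sigma> x}" and v_eq: "?v = orb \<sigma> (\<alpha> d)"
      unfolding S_def by blast
    from d x have "d \<in> D" and "orb \<sigma> d = ?v"
      by auto
    with no_loop v_eq show False
      by metis
  qed
  obtain w where w: "w \<in> map_vertices D \<sigma> - S" "map_adj D \<alpha> \<sigma> ?v w"
    by (rule three_connected_neighbour[OF S_sub card_S v_in v_notin])
  then obtain d where d: "d \<in> D" "orb \<sigma> d = ?v" "orb \<sigma> (\<alpha> d) = w"
    unfolding map_adj_def by blast
  then have "d \<in> {x, \<sigma> x}"
    using v_sub orb_self[of d \<sigma>] by blast
  with d(3) w(1) show False
    unfolding S_def by blast
qed

lemma sigma_neq: "d \<in> D \<Longrightarrow> \<sigma> d \<noteq> d"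
  using sigma_sigma_neq by force

lemma phi_neq:
  assumes d: "d \<in> D"
  shows "\<phi> d \<noteq> d"
proof
  assume "\<phi> d = d"
  then have "orb \<sigma> d = orb \<sigma> (\<alpha> d)"
    using orb_sigma_sigma[of "\<alpha> d"] d by simp
  with no_loop[OF d] show False
    by simp
qed

lemma phi_phi_neq:
  assumes d: "d \<in> D"
  shows "\<phi> (\<phi> d) \<noteq> d"
proof
  assume return: "\<phi> (\<phi> d) = d"
  define e where "e = \<phi> d"
  have e: "e \<in> D"
    using d by (simp add: e_def)
  have "orb \<sigma> d = orb \<sigma> (\<alpha> e)"
    using return orb_sigma_sigma[of "\<alpha> e"] e by (simp add: e_def)
  moreover have "orb \<sigma> (\<alpha> d) = orb \<sigma> (\<alpha> (\<alpha> e))"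
    using orb_sigma_sigma[of "\<alpha> d"] d e by (simp add: e_def)
  ultimately have "d = \<alpha> e"
    using no_multi_edge d e by simp
  then have "\<alpha> d = e"
    using e by simp
  then have "\<sigma> (\<alpha> d) = \<alpha> d"
    by (simp add: e_def)
  with sigma_neq[of "\<alpha> d"] d show False
    by simp
qed

lemma card_face_ge_3:
  assumes d: "d \<in> D"
  shows "3 \<le> card (orb \<phi> d)"
proof -
  have "\<phi> d \<noteq> \<phi> (\<phi> d)"
    using phi_neq[OF d] bij_betw_imp_inj_on[OF bij_phi] d by (metis inj_on_def bij_phi bij_betw_apply)
  then have "card {d, \<phi> d, \<phi> (\<phi> d)} = 3"
    using phi_neq[OF d] phi_phi_neq[OF d] by auto
  moreover have "{d, \<phi> d, \<phi> (\<phi> d)} \<subseteq> orb \<phi> d"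
    using orb_step[OF orb_step[OF orb_self], of \<phi> d] by (auto simp del: comp_apply intro: orb_step)
  moreover have "finite (orb \<phi> d)"
    using orb_subset[of \<phi> D d] bij_phi d finite_D by (auto simp: bij_betw_def intro: finite_subset)
  ultimately show ?thesis
    by (metis card_mono)
qed

lemma card_alpha_transversal:
  assumes "W \<subseteq> D" and switch: "\<forall>e\<in>D. \<alpha> e \<in> W \<longleftrightarrow> e \<notin> W"
  shows "card W = card (map_edges D \<alpha>)"
proof -
  have "inj_on (\<lambda>d. {d, \<alpha> d}) W"
  proof (rule inj_onI)
    fix d1 d2
    assume d: "d1 \<in> W" "d2 \<in> W" "{d1, \<alpha> d1} = {d2, \<alpha> d2}"
    then have "d1 = d2 \<or> d1 = \<alpha> d2"
      by blast
    moreover have "\<alpha> d2 \<notin> W"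
      using switch assms(1) d(2) by blast
    ultimately show "d1 = d2"
      using d(1) by blast
  qed
  moreover have "(\<lambda>d. {d, \<alpha> d}) ` W = map_edges D \<alpha>"
  proof
    show "map_edges D \<alpha> \<subseteq> (\<lambda>d. {d, \<alpha> d}) ` W"
    proof
      fix E
      assume "E \<in> map_edges D \<alpha>"
      then obtain d where d: "d \<in> D" "E = {d, \<alpha> d}"
        unfolding map_edges_def by blast
      show "E \<in> (\<lambda>d. {d, \<alpha> d}) ` W"
      proof (cases "d \<in> W")
        case False
        then have "\<alpha> d \<in> W" and "E = {\<alpha> d, \<alpha> (\<alpha> d)}"
          using switch d by (auto simp: insert_commute)
        then show ?thesis
          by blast
      qed (use d in blast)
    qed
  qed (use assms(1) in \<open>auto simp: map_edges_def\<close>)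
  ultimately show ?thesis
    by (simp add: card_image[symmetric])
qed

lemma card_faces_in_switching_set:
  assumes "Z \<subseteq> D" and alpha_switch: "\<forall>e\<in>D. \<alpha> e \<in> Z \<longleftrightarrow> e \<notin> Z"
    and "\<forall>e\<in>D. \<sigma> e \<in> Z \<longleftrightarrow> e \<notin> Z"
  shows "3 * card (orb \<phi> ` Z) \<le> card (map_edges D \<alpha>)"
proof -
  have "\<phi> ` Z \<subseteq> Z"
    using assms by auto
  then have "bij_betw \<phi> Z Z"
    using bij_betw_restrict_closed[OF finite_D bij_phi assms(1)] by blast
  then have "3 * card (orb \<phi> ` Z) \<le> card Z"
    using finite_subset[OF assms(1) finite_D] card_face_ge_3 assms(1)
    by (intro card_orbs_mult_le) auto
  also have "card Z = card (map_edges D \<alpha>)"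
    using assms(1) alpha_switch by (rule card_alpha_transversal)
  finally show ?thesis .
qed

lemma card_faces_in_switching_set_less:
  assumes "Z \<subseteq> D" and "\<forall>e\<in>D. \<alpha> e \<in> Z \<longleftrightarrow> e \<notin> Z"
    and "\<forall>e\<in>D. \<sigma> e \<in> Z \<longleftrightarrow> e \<notin> Z"
  shows "card (orb \<phi> ` Z) < card (orb \<sigma> ` D)"
proof -
  have "3 * card (orb \<phi> ` Z) \<le> card (map_edges D \<alpha>)"
    using assms by (rule card_faces_in_switching_set)
  moreover have "3 * card (orb \<phi> ` (D - Z)) \<le> card (map_edges D \<alpha>)"
    using assms by (intro card_faces_in_switching_set) auto
  moreover have "card (orb \<phi> ` D) \<le> card (orb \<phi> ` Z) + card (orb \<phi> ` (D - Z))"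
  proof -
    have "orb \<phi> ` D = orb \<phi> ` Z \<union> orb \<phi> ` (D - Z)"
      using assms(1) by blast
    then show ?thesis
      by (metis card_Un_le)
  qed
  \<comment> \<open>with Euler's formula: \<open>V = 2 + E - F \<ge> 2 + E - 2E/3 > E/3 \<ge> card (orb \<phi> ` Z)\<close>\<close>
  moreover have "int (card (orb \<sigma> ` D)) - int (card (map_edges D \<alpha>)) + int (card (orb \<phi> ` D)) = 2"
    using genus0 by (simp add: genus0_def map_vertices_def map_faces_def)
  ultimately show ?thesis
    by linarith
qed

end

section \<open>The truncation\<close>

(* The dart types are the numerals 0, 1, 2; keep the simplifier from turning 1 into Suc 0. *)
declare One_nat_def [simp del]

context polyhedral_sphere
begin

abbreviation TD :: "('d \<times> nat) set" where "TD \<equiv> trunc_darts D"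
abbreviation T\<alpha> :: "'d \<times> nat \<Rightarrow> 'd \<times> nat" where "T\<alpha> \<equiv> trunc_alpha D \<alpha> \<sigma>"
abbreviation T\<sigma> :: "'d \<times> nat \<Rightarrow> 'd \<times> nat" where "T\<sigma> \<equiv> trunc_sigma D"
abbreviation T\<sigma>' :: "'d \<times> nat \<Rightarrow> 'd \<times> nat" where "T\<sigma>' \<equiv> inv_into TD T\<sigma>"
abbreviation T\<phi> :: "'d \<times> nat \<Rightarrow> 'd \<times> nat" where "T\<phi> \<equiv> T\<sigma> \<circ> T\<alpha>"

lemma mem_TD [simp]: "(d, i) \<in> TD \<longleftrightarrow> d \<in> D \<and> (i = 0 \<or> i = 1 \<or> i = 2)"
  by (auto simp: trunc_darts_def)

lemma finite_TD: "finite TD"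
  using finite_D by (simp add: trunc_darts_def)

lemma TD_cases [consumes 1]:
  assumes "x \<in> TD"
  obtains d where "d \<in> D" "x = (d, 0)" | d where "d \<in> D" "x = (d, 1)" | d where "d \<in> D" "x = (d, 2)"
  using assms by (auto simp: trunc_darts_def)

lemma T_alpha_simps [simp]:
  assumes "d \<in> D"
  shows "T\<alpha> (d, 0) = (\<alpha> d, 0)" and "T\<alpha> (d, 1) = (\<sigma> d, 2)" and "T\<alpha> (d, 2) = (\<sigma>' d, 1)"
  using assms by (simp_all add: trunc_alpha_def)

lemma T_sigma_simps [simp]:
  assumes "d \<in> D"
  shows "T\<sigma> (d, 0) = (d, 1)" and "T\<sigma> (d, 1) = (d, 2)" and "T\<sigma> (d, 2) = (d, 0)"
  using assms by (simp_all add: trunc_sigma_def)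

lemma T_alpha_in: "x \<in> TD \<Longrightarrow> T\<alpha> x \<in> TD"
  by (erule TD_cases) simp_all

lemma T_sigma_in: "x \<in> TD \<Longrightarrow> T\<sigma> x \<in> TD"
  by (erule TD_cases) simp_all

lemma T_alpha_T_alpha: "x \<in> TD \<Longrightarrow> T\<alpha> (T\<alpha> x) = x"
  by (erule TD_cases) simp_all

lemma bij_T_alpha: "bij_betw T\<alpha> TD TD"
  by (rule bij_betw_byWitness[where f' = T\<alpha>]) (auto simp: T_alpha_T_alpha T_alpha_in)

lemma bij_T_sigma: "bij_betw T\<sigma> TD TD"
proof (rule bij_betw_byWitness[where f' = "T\<sigma> \<circ> T\<sigma>"])
  show "\<forall>x\<in>TD. (T\<sigma> \<circ> T\<sigma>) (T\<sigma> x) = x" and "\<forall>x\<in>TD. T\<sigma> ((T\<sigma> \<circ> T\<sigma>) x) = x"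
    by (auto elim: TD_cases)
qed (auto simp: T_sigma_in)

lemma T_sigma'_simps [simp]:
  assumes "d \<in> D"
  shows "T\<sigma>' (d, 0) = (d, 2)" and "T\<sigma>' (d, 1) = (d, 0)" and "T\<sigma>' (d, 2) = (d, 1)"
  using assms bij_betw_imp_inj_on[OF bij_T_sigma] by (auto intro: inv_into_f_eq)

lemma bij_T_phi: "bij_betw T\<phi> TD TD"
  using bij_T_alpha bij_T_sigma by (rule bij_betw_trans)

lemma fst_T_sigma: "x \<in> TD \<Longrightarrow> fst (T\<sigma> x) = fst x"
  by (erule TD_cases) simp_all

section \<open>Automorphisms of the truncation\<close>

(* The faces of T(P) are the orbits of T\<phi>; those inside D \<times> {2} replace the vertices of P. *)
definition vertex_transversal :: "('d \<times> nat) set \<Rightarrow> bool" where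
  "vertex_transversal Y \<longleftrightarrow> Y \<subseteq> TD \<and> (\<forall>e\<in>D. \<exists>!i. (e, i) \<in> Y)"

lemma vertex_transversal_unique:
  "vertex_transversal Y \<Longrightarrow> (e, i) \<in> Y \<Longrightarrow> (e, j) \<in> Y \<Longrightarrow> i = j"
  unfolding vertex_transversal_def by (metis mem_TD subsetD)

lemma vertex_transversalD:
  "vertex_transversal Y \<Longrightarrow> (e, i) \<in> Y \<Longrightarrow> e \<in> D \<and> (i = 0 \<or> i = 1 \<or> i = 2)"
  unfolding vertex_transversal_def by (metis mem_TD subsetD)

lemma vertex_transversalE:
  assumes "vertex_transversal Y" and "e \<in> D"
  obtains i where "(e, i) \<in> Y" and "i = 0 \<or> i = 1 \<or> i = 2"
  using assms vertex_transversalD[OF assms(1)] unfolding vertex_transversal_def by blast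

lemma vertex_transversal_type2_step:
  assumes Y: "vertex_transversal Y" and invariant: "\<forall>x\<in>TD. T\<phi> x \<in> Y \<longleftrightarrow> x \<in> Y"
    and e: "(e, 2) \<in> Y"
  shows "(\<alpha> e, 2) \<in> Y" and "(\<sigma> e, 2) \<in> Y"
proof -
  have "e \<in> D"
    using vertex_transversalD[OF Y e] ..
  then show "(\<sigma> e, 2) \<in> Y"
    using invariant[rule_format, of "(\<sigma> e, 2)"] e by simp
  have "(e, 0) \<notin> Y" and "(e, 1) \<notin> Y"
    using vertex_transversal_unique[OF Y e] by force+
  then have "(\<alpha> e, 1) \<notin> Y" and "(\<alpha> e, 0) \<notin> Y"
    using invariant[rule_format, of "(e, 0)"] invariant[rule_format, of "(\<alpha> e, 0)"] \<open>e \<in> D\<close>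
    by simp_all
  moreover obtain i where "(\<alpha> e, i) \<in> Y" and "i = 0 \<or> i = 1 \<or> i = 2"
    using vertex_transversalE[OF Y] \<open>e \<in> D\<close> alpha_in by blast
  ultimately show "(\<alpha> e, 2) \<in> Y"
    by auto
qed

lemma vertex_transversal_with_type2:
  assumes Y: "vertex_transversal Y" and invariant: "\<forall>x\<in>TD. T\<phi> x \<in> Y \<longleftrightarrow> x \<in> Y"
    and "(e0, 2) \<in> Y"
  shows "Y = D \<times> {2}"
proof -
  have "{e \<in> D. (e, 2) \<in> Y} = D"
  proof (rule alpha_sigma_closed_subset_eq)
    show "{e \<in> D. (e, 2) \<in> Y} \<noteq> {}"
      using assms(3) vertex_transversalD[OF Y assms(3)] by blast
    show "\<forall>e\<in>{e \<in> D. (e, 2) \<in> Y}. \<alpha> e \<in> {e \<in> D. (e, 2) \<in> Y} \<and> \<sigma> e \<in> {e \<in> D. (e, 2) \<in> Y}"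
      using vertex_transversal_type2_step[OF Y invariant] by simp
  qed blast
  then have all_type2: "(e, 2) \<in> Y" if "e \<in> D" for e
    using that by blast
  show ?thesis
  proof
    show "Y \<subseteq> D \<times> {2}"
    proof
      fix x
      assume "x \<in> Y"
      moreover obtain e i where "x = (e, i)"
        by (cases x)
      ultimately have "(e, i) \<in> Y" and "(e, 2) \<in> Y" and "e \<in> D"
        using vertex_transversalD[OF Y] all_type2 by blast+
      then show "x \<in> D \<times> {2}"
        using vertex_transversal_unique[OF Y] \<open>x = (e, i)\<close> by blast
    qed
    show "D \<times> {2} \<subseteq> Y"
      using all_type2 by blast
  qed
qed

lemma vertex_transversal_type01:
  assumes Y: "vertex_transversal Y" and no_type2: "\<forall>e. (e, 2) \<notin> Y" and e: "e \<in> D"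
  shows "(e, 0) \<in> Y \<longleftrightarrow> (e, 1) \<notin> Y"
proof -
  obtain i where "(e, i) \<in> Y" and "i = 0 \<or> i = 1 \<or> i = 2"
    using vertex_transversalE[OF Y e] .
  then show ?thesis
    using vertex_transversal_unique[OF Y] no_type2 by fastforce
qed

lemma vertex_transversal_without_type2_switching:
  assumes Y: "vertex_transversal Y" and invariant: "\<forall>x\<in>TD. T\<phi> x \<in> Y \<longleftrightarrow> x \<in> Y"
    and no_type2: "\<forall>e. (e, 2) \<notin> Y"
  defines "Z \<equiv> {e \<in> D. (e, 0) \<in> Y}"
  shows "\<forall>e\<in>D. \<alpha> e \<in> Z \<longleftrightarrow> e \<notin> Z" and "\<forall>e\<in>D. \<sigma> e \<in> Z \<longleftrightarrow> e \<notin> Z"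
proof -
  note type01 = vertex_transversal_type01[OF Y no_type2]
  show "\<forall>e\<in>D. \<alpha> e \<in> Z \<longleftrightarrow> e \<notin> Z"
  proof
    fix e
    assume e: "e \<in> D"
    have "(\<alpha> e, 1) \<in> Y \<longleftrightarrow> (e, 0) \<in> Y"
      using invariant[rule_format, of "(e, 0)"] e by simp
    then show "\<alpha> e \<in> Z \<longleftrightarrow> e \<notin> Z"
      using type01[of "\<alpha> e"] e by (simp add: Z_def)
  qed
  show "\<forall>e\<in>D. \<sigma> e \<in> Z \<longleftrightarrow> e \<notin> Z"
  proof
    fix e
    assume e: "e \<in> D"
    have "(\<sigma> e, 0) \<in> Y \<longleftrightarrow> (e, 1) \<in> Y"
      using invariant[rule_format, of "(e, 1)"] e by simp
    then show "\<sigma> e \<in> Z \<longleftrightarrow> e \<notin> Z"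
      using type01[of e] e by (simp add: Z_def)
  qed
qed

lemma card_orbs_vertex_transversal_without_type2:
  assumes Y: "vertex_transversal Y" and invariant: "\<forall>x\<in>TD. T\<phi> x \<in> Y \<longleftrightarrow> x \<in> Y"
    and no_type2: "\<forall>e. (e, 2) \<notin> Y"
  defines "Z \<equiv> {e \<in> D. (e, 0) \<in> Y}"
  shows "card (orb T\<phi> ` Y) = card (orb \<phi> ` Z)"
proof -
  have "Y \<subseteq> TD"
    using Y by (simp add: vertex_transversal_def)
  have "Z \<subseteq> D"
    unfolding Z_def by blast
  have switch: "\<forall>e\<in>D. \<alpha> e \<in> Z \<longleftrightarrow> e \<notin> Z" "\<forall>e\<in>D. \<sigma> e \<in> Z \<longleftrightarrow> e \<notin> Z"
    using vertex_transversal_without_type2_switching[OF Y invariant no_type2] by (simp_all add: Z_def)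
  have "bij_betw T\<phi> Y Y"
    using bij_betw_restrict_closed[OF finite_TD bij_T_phi \<open>Y \<subseteq> TD\<close>] invariant \<open>Y \<subseteq> TD\<close>
    by blast
  moreover have "(\<lambda>e. (e, 0)) ` Z \<subseteq> Y"
    by (auto simp: Z_def)
  moreover have "\<forall>x\<in>Y. T\<phi> x \<in> (\<lambda>e. (e, 0)) ` Z \<longleftrightarrow> x \<notin> (\<lambda>e. (e, 0)) ` Z"
  proof
    fix x
    assume "x \<in> Y"
    moreover obtain e i where x: "x = (e, i)"
      by (cases x)
    ultimately have "e \<in> D" and "i = 0 \<or> i = 1"
      using vertex_transversalD[OF Y] no_type2 by blast+
    with x show "T\<phi> x \<in> (\<lambda>e. (e, 0)) ` Z \<longleftrightarrow> x \<notin> (\<lambda>e. (e, 0)) ` Z"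
      using switch vertex_transversal_type01[OF Y no_type2] \<open>x \<in> Y\<close> by (auto simp: Z_def)
  qed
  ultimately have "card (orb T\<phi> ` Y) = card (orb (T\<phi> \<circ> T\<phi>) ` (\<lambda>e. (e, 0)) ` Z)"
    using finite_subset[OF \<open>Y \<subseteq> TD\<close> finite_TD] by (intro card_orbs_alternating)
  also have "\<dots> = card (orb \<phi> ` Z)"
    using switch \<open>Z \<subseteq> D\<close> by (intro card_orbs_conj) (auto simp: inj_on_def)
  finally show ?thesis .
qed

lemma vertex_transversal_eq_vertex_faces:
  assumes Y: "vertex_transversal Y" and invariant: "\<forall>x\<in>TD. T\<phi> x \<in> Y \<longleftrightarrow> x \<in> Y"
    and card: "card (orb T\<phi> ` Y) = card (orb \<sigma> ` D)"
  shows "Y = D \<times> {2}"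
proof (cases "\<exists>e. (e, 2) \<in> Y")
  case True
  then obtain e where "(e, 2) \<in> Y"
    by blast
  then show ?thesis
    by (rule vertex_transversal_with_type2[OF Y invariant])
next
  case False
  then have no_type2: "\<forall>e. (e, 2) \<notin> Y"
    by blast
  let ?Z = "{e \<in> D. (e, 0) \<in> Y}"
  have "card (orb \<phi> ` ?Z) < card (orb \<sigma> ` D)"
    using vertex_transversal_without_type2_switching[OF Y invariant no_type2]
    by (intro card_faces_in_switching_set_less) auto
  with card show ?thesis
    using card_orbs_vertex_transversal_without_type2[OF Y invariant no_type2] by linarith
qed

lemma trunc_aut_in: "map_aut TD T\<alpha> T\<sigma> h \<Longrightarrow> x \<in> TD \<Longrightarrow> h x \<in> TD"
  unfolding map_aut_def by (meson bij_betw_apply)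

lemma trunc_aut_alpha: "map_aut TD T\<alpha> T\<sigma> h \<Longrightarrow> x \<in> TD \<Longrightarrow> h (T\<alpha> x) = T\<alpha> (h x)"
  by (simp add: map_aut_def)

(* For orientation-reversing h the relation h \<circ> T\<sigma> = T\<sigma>' \<circ> h is equivalent to h \<circ> T\<sigma>' = T\<sigma> \<circ> h. *)
lemma trunc_aut_commutes:
  assumes "map_aut TD T\<alpha> T\<sigma> h"
  obtains t where "t = T\<sigma> \<or> t = T\<sigma>'" and "\<forall>x\<in>TD. h (t x) = T\<sigma> (h x)"
proof (cases "orientation_preserving TD T\<sigma> h")
  case True
  then show thesis
    using that[of T\<sigma>] by (simp add: orientation_preserving_def)
next
  case False
  then have reversing: "\<forall>x\<in>TD. h (T\<sigma> x) = T\<sigma>' (h x)"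
    using assms by (simp add: map_aut_def)
  have "h (T\<sigma>' y) = T\<sigma> (h y)" if y: "y \<in> TD" for y
  proof -
    have "T\<sigma>' y \<in> TD"
      using bij_betw_inv_into[OF bij_T_sigma] y by (rule bij_betw_apply)
    then have "h (T\<sigma>' y) \<in> TD"
      by (rule trunc_aut_in[OF assms])
    moreover have "h y = T\<sigma>' (h (T\<sigma>' y))"
      using reversing y \<open>T\<sigma>' y \<in> TD\<close> bij_T_sigma by (metis bij_betw_inv_into_right)
    ultimately show ?thesis
      using bij_T_sigma by (simp add: bij_betw_inv_into_right)
  qed
  then show thesis
    using that[of T\<sigma>'] by blast
qed

definition dart_map :: "('d \<times> nat \<Rightarrow> 'd \<times> nat) \<Rightarrow> 'd \<Rightarrow> 'd" where
  "dart_map h d = (if d \<in> D then fst (h (d, 0)) else d)"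

lemma dart_map_in: "map_aut TD T\<alpha> T\<sigma> h \<Longrightarrow> d \<in> D \<Longrightarrow> dart_map h d \<in> D"
  using trunc_aut_in[of h "(d, 0)"] by (cases "h (d, 0)") (simp add: dart_map_def)

lemma trunc_aut_fst_eq:
  assumes h: "map_aut TD T\<alpha> T\<sigma> h" and d: "d \<in> D" and i: "i = 0 \<or> i = 1 \<or> i = 2"
  shows "fst (h (d, i)) = dart_map h d"
proof -
  obtain t where t: "t = T\<sigma> \<or> t = T\<sigma>'" "\<forall>x\<in>TD. h (t x) = T\<sigma> (h x)"
    using trunc_aut_commutes[OF h] by blast
  have step: "fst (h (t x)) = fst (h x)" if "x \<in> TD" for x
    using t(2) that fst_T_sigma trunc_aut_in[OF h] by simp
  from t(1) show ?thesis
  proof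
    assume "t = T\<sigma>"
    then have "fst (h (d, 1)) = fst (h (d, 0))" and "fst (h (d, 2)) = fst (h (d, 1))"
      using step[of "(d, 0)"] step[of "(d, 1)"] d by simp_all
    then show ?thesis
      using i d by (auto simp: dart_map_def)
  next
    assume "t = T\<sigma>'"
    then have "fst (h (d, 2)) = fst (h (d, 0))" and "fst (h (d, 1)) = fst (h (d, 2))"
      using step[of "(d, 0)"] step[of "(d, 2)"] d by simp_all
    then show ?thesis
      using i d by (auto simp: dart_map_def)
  qed
qed

lemma bij_dart_map:
  assumes h: "map_aut TD T\<alpha> T\<sigma> h"
  shows "bij_betw (dart_map h) D D"
proof -
  have into: "dart_map h ` D \<subseteq> D"
    using dart_map_in[OF h] by blast
  have onto: "D \<subseteq> dart_map h ` D"
  proof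
    fix e
    assume "e \<in> D"
    then have "(e, 0) \<in> h ` TD"
      using h by (simp add: map_aut_def bij_betw_def)
    then obtain d i where di: "(d, i) \<in> TD" "h (d, i) = (e, 0)"
      by auto
    then have "dart_map h d = e"
      using trunc_aut_fst_eq[OF h, of d i] by simp
    then show "e \<in> dart_map h ` D"
      using di(1) by auto
  qed
  show ?thesis
    unfolding bij_betw_def using finite_surj_inj[OF finite_D onto] into onto by blast
qed

lemma trunc_aut_transversal:
  assumes h: "map_aut TD T\<alpha> T\<sigma> h" and k: "k = 0 \<or> k = 1 \<or> k = 2"
  shows "vertex_transversal (h ` (D \<times> {k}))"
  unfolding vertex_transversal_def
proof
  let ?g = "dart_map h"
  show "h ` (D \<times> {k}) \<subseteq> TD"
    using trunc_aut_in[OF h] k by auto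
  have hk: "h (d, k) = (?g d, snd (h (d, k)))" if "d \<in> D" for d
    using trunc_aut_fst_eq[OF h that k] by (metis prod.collapse)
  show "\<forall>e\<in>D. \<exists>!i. (e, i) \<in> h ` (D \<times> {k})"
  proof
    fix e
    assume "e \<in> D"
    then obtain d where d: "d \<in> D" "?g d = e"
      using bij_dart_map[OF h] by (metis bij_betw_def imageE)
    show "\<exists>!i. (e, i) \<in> h ` (D \<times> {k})"
    proof
      show "(e, snd (h (d, k))) \<in> h ` (D \<times> {k})"
        using hk[OF d(1)] d by (metis SigmaI image_eqI singletonI)
    next
      fix i
      assume "(e, i) \<in> h ` (D \<times> {k})"
      then obtain d' where d': "d' \<in> D" "(e, i) = h (d', k)"
        by blast
      have "(e, i) = (?g d', snd (h (d', k)))"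
        by (rule trans[OF d'(2) hk[OF d'(1)]])
      then have "?g d' = ?g d" and i: "i = snd (h (d', k))"
        using d(2) by simp_all
      then have "d' = d"
        using bij_dart_map[OF h] d(1) d'(1) by (metis bij_betw_def inj_onD)
      then show "i = snd (h (d, k))"
        using i by simp
    qed
  qed
qed

lemma trunc_aut_image_type:
  assumes h: "map_aut TD T\<alpha> T\<sigma> h" and k: "k = 0 \<or> k = 1 \<or> k = 2"
    and r: "r ` TD \<subseteq> TD" and conj: "\<forall>x\<in>TD. h (r x) = T\<phi> (h x)"
    and invariant: "\<forall>x\<in>TD. r x \<in> D \<times> {k} \<longleftrightarrow> x \<in> D \<times> {k}"
    and card: "card (orb r ` (D \<times> {k})) = card (orb \<sigma> ` D)"
  shows "h ` (D \<times> {k}) = D \<times> {2}"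
proof (rule vertex_transversal_eq_vertex_faces)
  have hb: "bij_betw h TD TD"
    using h by (simp add: map_aut_def)
  have B: "D \<times> {k} \<subseteq> TD"
    using k by auto
  show "vertex_transversal (h ` (D \<times> {k}))"
    by (rule trunc_aut_transversal[OF h k])
  show "\<forall>x\<in>TD. T\<phi> x \<in> h ` (D \<times> {k}) \<longleftrightarrow> x \<in> h ` (D \<times> {k})"
    by (rule image_invariant_if_conj[OF hb r conj B invariant])
  have "card (orb T\<phi> ` h ` (D \<times> {k})) = card (orb r ` (D \<times> {k}))"
  proof (rule card_orbs_conj)
    show "inj_on h (D \<times> {k})"
      using hb B by (meson bij_betw_def inj_on_subset)
    show "r ` (D \<times> {k}) \<subseteq> D \<times> {k}"
      using invariant B by blast
    show "\<forall>x\<in>D \<times> {k}. h (r x) = T\<phi> (h x)"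
      using conj B by blast
  qed
  with card show "card (orb T\<phi> ` h ` (D \<times> {k})) = card (orb \<sigma> ` D)"
    by simp
qed

lemma trunc_aut_preserving_type2:
  assumes h: "map_aut TD T\<alpha> T\<sigma> h" and preserving: "\<forall>x\<in>TD. h (T\<sigma> x) = T\<sigma> (h x)"
  shows "h ` (D \<times> {2}) = D \<times> {2}"
proof (rule trunc_aut_image_type[OF h])
  show "T\<phi> ` TD \<subseteq> TD"
    using bij_T_phi by (simp add: bij_betw_def)
  show "\<forall>x\<in>TD. h (T\<phi> x) = T\<phi> (h x)"
    using preserving trunc_aut_alpha[OF h] T_alpha_in by simp
  show "\<forall>x\<in>TD. T\<phi> x \<in> D \<times> {2} \<longleftrightarrow> x \<in> D \<times> {2}"
    by (auto elim: TD_cases)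
  have "card (orb T\<phi> ` (\<lambda>d. (d, 2)) ` D) = card (orb \<sigma>' ` D)"
    by (rule card_orbs_conj) (auto simp: inj_on_def)
  also have "orb \<sigma>' ` D = orb \<sigma> ` D"
    using orb_inv_into[OF finite_D bij_sigma] by simp
  moreover have "D \<times> {2} = (\<lambda>d. (d, 2 :: nat)) ` D"
    by auto
  ultimately show "card (orb T\<phi> ` (D \<times> {2})) = card (orb \<sigma> ` D)"
    by simp
qed simp

lemma trunc_aut_reversing_type1:
  assumes h: "map_aut TD T\<alpha> T\<sigma> h" and reversing: "\<forall>x\<in>TD. h (T\<sigma>' x) = T\<sigma> (h x)"
  shows "h ` (D \<times> {1}) = D \<times> {2}"
proof (rule trunc_aut_image_type[OF h, where r = "T\<sigma>' \<circ> T\<alpha>"])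
  show "(T\<sigma>' \<circ> T\<alpha>) ` TD \<subseteq> TD"
    using bij_betw_inv_into[OF bij_T_sigma] bij_T_alpha by (auto simp: bij_betw_def)
  show "\<forall>x\<in>TD. h ((T\<sigma>' \<circ> T\<alpha>) x) = T\<phi> (h x)"
    using reversing trunc_aut_alpha[OF h] T_alpha_in by simp
  show "\<forall>x\<in>TD. (T\<sigma>' \<circ> T\<alpha>) x \<in> D \<times> {1} \<longleftrightarrow> x \<in> D \<times> {1}"
    by (auto elim: TD_cases)
  have "card (orb (T\<sigma>' \<circ> T\<alpha>) ` (\<lambda>d. (d, 1)) ` D) = card (orb \<sigma> ` D)"
    by (rule card_orbs_conj) (auto simp: inj_on_def)
  moreover have "D \<times> {1} = (\<lambda>d. (d, 1 :: nat)) ` D"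
    by auto
  ultimately show "card (orb (T\<sigma>' \<circ> T\<alpha>) ` (D \<times> {1})) = card (orb \<sigma> ` D)"
    by simp
qed simp

lemma trunc_aut_edge_dart:
  assumes h: "map_aut TD T\<alpha> T\<sigma> h" and d: "d \<in> D"
  shows "h (d, 0) = (dart_map h d, 0)"
proof -
  obtain t where t: "t = T\<sigma> \<or> t = T\<sigma>'" "\<forall>x\<in>TD. h (t x) = T\<sigma> (h x)"
    using trunc_aut_commutes[OF h] by blast
  obtain k where k: "k = 1 \<or> k = 2" and "h (d, k) \<in> D \<times> {2}" and "h (d, 0) = T\<sigma> (h (d, k))"
    using t(1)
  proof
    assume "t = T\<sigma>"
    with t(2) have preserving: "\<forall>x\<in>TD. h (T\<sigma> x) = T\<sigma> (h x)"
      by simp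
    have "h (d, 2) \<in> D \<times> {2}"
      using trunc_aut_preserving_type2[OF h preserving] d by blast
    moreover have "h (d, 0) = T\<sigma> (h (d, 2))"
      using preserving[rule_format, of "(d, 2)"] d by simp
    ultimately show thesis
      using that[of 2] by simp
  next
    assume "t = T\<sigma>'"
    with t(2) have reversing: "\<forall>x\<in>TD. h (T\<sigma>' x) = T\<sigma> (h x)"
      by simp
    have "h (d, 1) \<in> D \<times> {2}"
      using trunc_aut_reversing_type1[OF h reversing] d by blast
    moreover have "h (d, 0) = T\<sigma> (h (d, 1))"
      using reversing[rule_format, of "(d, 1)"] d by simp
    ultimately show thesis
      using that[of 1] by simp
  qed
  moreover have "fst (h (d, k)) = dart_map h d"
    using trunc_aut_fst_eq[OF h d] k by blast
  ultimately have "h (d, k) = (dart_map h d, 2)"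
    by auto
  with \<open>h (d, 0) = T\<sigma> (h (d, k))\<close> show ?thesis
    using dart_map_in[OF h d] by simp
qed

lemma trunc_aut_preserving_apply:
  assumes h: "map_aut TD T\<alpha> T\<sigma> h" and preserving: "\<forall>x\<in>TD. h (T\<sigma> x) = T\<sigma> (h x)"
    and d: "d \<in> D"
  shows "h (d, 1) = (dart_map h d, 1)" and "h (d, 2) = (dart_map h d, 2)"
  using preserving[rule_format, of "(d, 0)"] preserving[rule_format, of "(d, 1)"]
    trunc_aut_edge_dart[OF h d] dart_map_in[OF h d] d by simp_all

lemma trunc_aut_reversing_apply:
  assumes h: "map_aut TD T\<alpha> T\<sigma> h" and reversing: "\<forall>x\<in>TD. h (T\<sigma>' x) = T\<sigma> (h x)"
    and d: "d \<in> D"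
  shows "h (d, 2) = (dart_map h d, 1)" and "h (d, 1) = (dart_map h d, 2)"
  using reversing[rule_format, of "(d, 0)"] reversing[rule_format, of "(d, 2)"]
    trunc_aut_edge_dart[OF h d] dart_map_in[OF h d] d by simp_all

lemma dart_map_alpha:
  assumes h: "map_aut TD T\<alpha> T\<sigma> h" and d: "d \<in> D"
  shows "dart_map h (\<alpha> d) = \<alpha> (dart_map h d)"
  using trunc_aut_alpha[OF h, of "(d, 0)"] trunc_aut_edge_dart[OF h] dart_map_in[OF h] d by simp

lemma dart_map_preserving:
  assumes h: "map_aut TD T\<alpha> T\<sigma> h" and preserving: "\<forall>x\<in>TD. h (T\<sigma> x) = T\<sigma> (h x)"
  shows "orientation_preserving D \<sigma> (dart_map h)"
  unfolding orientation_preserving_def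
proof
  fix d
  assume d: "d \<in> D"
  show "dart_map h (\<sigma> d) = \<sigma> (dart_map h d)"
    using trunc_aut_alpha[OF h, of "(d, 1)"] trunc_aut_preserving_apply[OF h preserving]
      dart_map_in[OF h] d by simp
qed

lemma dart_map_reversing:
  assumes h: "map_aut TD T\<alpha> T\<sigma> h" and reversing: "\<forall>x\<in>TD. h (T\<sigma>' x) = T\<sigma> (h x)"
  shows "\<forall>d\<in>D. dart_map h (\<sigma> d) = \<sigma>' (dart_map h d)"
proof
  fix d
  assume d: "d \<in> D"
  show "dart_map h (\<sigma> d) = \<sigma>' (dart_map h d)"
    using trunc_aut_alpha[OF h, of "(d, 1)"] trunc_aut_reversing_apply[OF h reversing]
      dart_map_in[OF h] d by simp
qed

lemma not_orientation_preserving_if_reversing: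
  assumes "g ` D \<subseteq> D" and reversing: "\<forall>d\<in>D. g (\<sigma> d) = \<sigma>' (g d)"
  shows "\<not> orientation_preserving D \<sigma> g"
proof
  assume "orientation_preserving D \<sigma> g"
  obtain d where d: "d \<in> D"
    using D_ne by blast
  then have "g d \<in> D"
    using assms(1) by blast
  have "\<sigma> (g d) = \<sigma>' (g d)"
    using \<open>orientation_preserving D \<sigma> g\<close> reversing d by (simp add: orientation_preserving_def)
  then have "\<sigma> (\<sigma> (g d)) = g d"
    using \<open>g d \<in> D\<close> by simp
  with sigma_sigma_neq[OF \<open>g d \<in> D\<close>] show False ..
qed

lemma dart_map_aut:
  assumes h: "map_aut TD T\<alpha> T\<sigma> h"
  shows "map_aut D \<alpha> \<sigma> (dart_map h)"
proof -
  obtain t where t: "t = T\<sigma> \<or> t = T\<sigma>'" "\<forall>x\<in>TD. h (t x) = T\<sigma> (h x)"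
    using trunc_aut_commutes[OF h] by blast
  then have "orientation_preserving D \<sigma> (dart_map h) \<or>
      (\<forall>d\<in>D. dart_map h (\<sigma> d) = \<sigma>' (dart_map h d))"
    using dart_map_preserving[OF h] dart_map_reversing[OF h] by blast
  then show ?thesis
    using bij_dart_map[OF h] dart_map_alpha[OF h] unfolding map_aut_def
    by (simp add: dart_map_def)
qed

lemma trunc_induced_dart_map:
  assumes h: "map_aut TD T\<alpha> T\<sigma> h"
  shows "trunc_induced D \<sigma> (dart_map h) = h"
proof
  fix x
  show "trunc_induced D \<sigma> (dart_map h) x = h x"
  proof (cases "x \<in> TD")
    case True
    obtain t where t: "t = T\<sigma> \<or> t = T\<sigma>'" "\<forall>x\<in>TD. h (t x) = T\<sigma> (h x)"
      using trunc_aut_commutes[OF h] by blast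
    from t(1) show ?thesis
    proof
      assume "t = T\<sigma>"
      with t(2) have preserving: "\<forall>x\<in>TD. h (T\<sigma> x) = T\<sigma> (h x)"
        by simp
      from True show ?thesis
        by (cases rule: TD_cases) (simp_all add: trunc_induced_def dart_map_preserving[OF h preserving]
            trunc_aut_edge_dart[OF h] trunc_aut_preserving_apply[OF h preserving])
    next
      assume "t = T\<sigma>'"
      with t(2) have reversing: "\<forall>x\<in>TD. h (T\<sigma>' x) = T\<sigma> (h x)"
        by simp
      have "\<not> orientation_preserving D \<sigma> (dart_map h)"
        using dart_map_in[OF h] dart_map_reversing[OF h reversing]
        by (intro not_orientation_preserving_if_reversing) auto
      with True show ?thesis
        by (cases rule: TD_cases) (simp_all add: trunc_induced_def
            trunc_aut_edge_dart[OF h] trunc_aut_reversing_apply[OF h reversing])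
    qed
  next
    case False
    moreover have "h x = x"
      using h False unfolding map_aut_def by blast
    ultimately show ?thesis
      by (simp add: trunc_induced_def)
  qed
qed

lemma preserving_sigma':
  assumes "g ` D \<subseteq> D" and "\<forall>d\<in>D. g (\<sigma> d) = \<sigma> (g d)" and "d \<in> D"
  shows "g (\<sigma>' d) = \<sigma>' (g d)"
proof -
  have "g d = \<sigma> (g (\<sigma>' d))"
    using assms(2,3) by (metis sigma'_in sigma_sigma')
  then show ?thesis
    using assms(1,3) by (metis image_subset_iff sigma'_in sigma'_sigma)
qed

lemma reversing_sigma':
  assumes "g ` D \<subseteq> D" and "\<forall>d\<in>D. g (\<sigma> d) = \<sigma>' (g d)" and "d \<in> D"
  shows "g (\<sigma>' d) = \<sigma> (g d)"
proof -
  have "g d = \<sigma>' (g (\<sigma>' d))"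
    using assms(2,3) by (metis sigma'_in sigma_sigma')
  then show ?thesis
    using assms(1,3) by (metis image_subset_iff sigma'_in sigma_sigma')
qed

lemma bij_trunc_induced:
  assumes g: "bij_betw g D D"
  shows "bij_betw (trunc_induced D \<sigma> g) TD TD"
proof -
  let ?H = "trunc_induced D \<sigma> g"
  have gD: "g d \<in> D" if "d \<in> D" for d
    using g that by (rule bij_betw_apply)
  have into: "?H ` TD \<subseteq> TD"
    using gD by (auto elim!: TD_cases simp: trunc_induced_def)
  have "inj_on ?H TD"
  proof (rule inj_onI)
    fix x y
    assume "x \<in> TD" "y \<in> TD" "?H x = ?H y"
    then obtain d i d' j where x: "x = (d, i)" "d \<in> D" "i \<in> {0, 1, 2}" and y: "y = (d', j)" "d' \<in> D" "j \<in> {0, 1, 2}"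
      and "g d = g d'" and "i = j"
      by (auto elim!: TD_cases simp: trunc_induced_def split: if_splits)
    then show "x = y"
      using bij_betw_imp_inj_on[OF g] by (auto dest: inj_onD)
  qed
  with into show ?thesis
    by (simp add: bij_betw_def endo_inj_surj[OF finite_TD])
qed

lemma trunc_induced_aut:
  assumes g: "map_aut D \<alpha> \<sigma> g"
  shows "map_aut TD T\<alpha> T\<sigma> (trunc_induced D \<sigma> g)"
proof -
  let ?H = "trunc_induced D \<sigma> g"
  have gD: "g ` D \<subseteq> D" and g_alpha: "\<forall>d\<in>D. g (\<alpha> d) = \<alpha> (g d)"
    using g by (auto simp: map_aut_def bij_betw_def)
  then have g_in: "g d \<in> D" if "d \<in> D" for d
    using that by blast
  have "(\<forall>x\<in>TD. ?H (T\<alpha> x) = T\<alpha> (?H x)) \<and>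
      (orientation_preserving TD T\<sigma> ?H \<or> (\<forall>x\<in>TD. ?H (T\<sigma> x) = T\<sigma>' (?H x)))"
  proof (cases "orientation_preserving D \<sigma> g")
    case True
    then have g_sigma: "\<forall>d\<in>D. g (\<sigma> d) = \<sigma> (g d)"
      by (simp add: orientation_preserving_def)
    have "\<forall>x\<in>TD. ?H (T\<alpha> x) = T\<alpha> (?H x)" and "orientation_preserving TD T\<sigma> ?H"
      unfolding orientation_preserving_def using g_in g_alpha g_sigma preserving_sigma'[OF gD g_sigma]
      by (auto elim!: TD_cases simp: trunc_induced_def True)
    then show ?thesis
      by blast
  next
    case False
    then have g_sigma: "\<forall>d\<in>D. g (\<sigma> d) = \<sigma>' (g d)"
      using g by (simp add: map_aut_def)
    have "\<forall>x\<in>TD. ?H (T\<alpha> x) = T\<alpha> (?H x)" and "\<forall>x\<in>TD. ?H (T\<sigma> x) = T\<sigma>' (?H x)"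
      using g_in g_alpha g_sigma reversing_sigma'[OF gD g_sigma]
      by (auto elim!: TD_cases simp: trunc_induced_def False One_nat_def[symmetric])
        \<comment> \<open>\<open>3 - 2\<close> is evaluated to \<open>Suc 0\<close>\<close>
    then show ?thesis
      by blast
  qed
  moreover have "bij_betw ?H TD TD"
    using g by (intro bij_trunc_induced) (simp add: map_aut_def)
  ultimately show ?thesis
    unfolding map_aut_def by (simp add: trunc_induced_def)
qed

lemma inj_on_trunc_induced: "inj_on (trunc_induced D \<sigma>) (Aut D \<alpha> \<sigma>)"
proof (rule inj_onI)
  fix g1 g2
  assume g: "g1 \<in> Aut D \<alpha> \<sigma>" "g2 \<in> Aut D \<alpha> \<sigma>" and eq: "trunc_induced D \<sigma> g1 = trunc_induced D \<sigma> g2"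
  show "g1 = g2"
  proof
    fix d
    show "g1 d = g2 d"
    proof (cases "d \<in> D")
      case True
      then show ?thesis
        using fun_cong[OF eq, of "(d, 0)"] by (simp add: trunc_induced_def)
    next
      case False
      then show ?thesis
        using g by (simp add: Aut_def map_aut_def)
    qed
  qed
qed

lemma image_trunc_induced_Aut: "trunc_induced D \<sigma> ` Aut D \<alpha> \<sigma> = Aut TD T\<alpha> T\<sigma>"
proof
  show "trunc_induced D \<sigma> ` Aut D \<alpha> \<sigma> \<subseteq> Aut TD T\<alpha> T\<sigma>"
    using trunc_induced_aut by (auto simp: Aut_def)
  show "Aut TD T\<alpha> T\<sigma> \<subseteq> trunc_induced D \<sigma> ` Aut D \<alpha> \<sigma>"
  proof
    fix h
    assume "h \<in> Aut TD T\<alpha> T\<sigma>"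
    then have h: "map_aut TD T\<alpha> T\<sigma> h"
      by (simp add: Aut_def)
    then have "h = trunc_induced D \<sigma> (dart_map h)" and "dart_map h \<in> Aut D \<alpha> \<sigma>"
      using trunc_induced_dart_map dart_map_aut by (simp_all add: Aut_def)
    then show "h \<in> trunc_induced D \<sigma> ` Aut D \<alpha> \<sigma>"
      by blast
  qed
qed

end

theorem lemma8:
  fixes D :: "'d set" and \<alpha> \<sigma> :: "'d \<Rightarrow> 'd"
  assumes "polyhedron D \<alpha> \<sigma>"
  shows "bij_betw (trunc_induced D \<sigma>) (Aut D \<alpha> \<sigma>)
           (Aut (trunc_darts D) (trunc_alpha D \<alpha> \<sigma>) (trunc_sigma D))
         \<and> card (Aut (trunc_darts D) (trunc_alpha D \<alpha> \<sigma>) (trunc_sigma D)) = card (Aut D \<alpha> \<sigma>)"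
proof -
  interpret polyhedral_sphere D \<alpha> \<sigma>
    using assms by unfold_locales
  have "bij_betw (trunc_induced D \<sigma>) (Aut D \<alpha> \<sigma>) (Aut TD T\<alpha> T\<sigma>)"
    unfolding bij_betw_def using inj_on_trunc_induced image_trunc_induced_Aut by blast
  then show ?thesis
    using bij_betw_same_card by metis
qed

end
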